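(* Let $n\ge1$, let $\mu,\nu\in\mathbb{R}^n$ be probability vectors, let $\gamma>0$, and let $\phi$ satisfy the Bregman assumption in the context with $\phi'_0=-\infty$. Let $\hat X,\tilde X\in U_\phi$, and let $\hat C,\tilde C\in S_h$ be the unique matrices in $S_h$ with $\mathcal{F}(\hat C)=\hat X$ and $\mathcal{F}(\tilde C)=\tilde X$. Then $$\|\hat C-\tilde C\|_\infty\le 2\gamma\,\|\phi'(\hat X)-\phi'(\tilde X)\|_\infty,$$ where $\phi'(X)$ denotes entrywise application and $\|\cdot\|_\infty$ is the maximum absolute entry.
   Context: Probability vectors have nonnegative entries summing to $1$. $\mathcal{U}(\mu,\nu):=\{X\in\mathbb{R}_+^{n\times n}: X\mathbf{1}=\mu,\ X^\top\mathbf{1}=\nu\}$. Bregman assumption on $\phi:\mathbb{R}\to(-\infty,+\infty]$: $I=\operatorname{dom}\phi$ is an interval with $(0,1)\subseteq\operatorname{int}(I)$; $\phi$ is of Legendre type (proper, closed, strictly convex on $\operatorname{int}(\operatorname{dom}\phi)$, essentially smooth); $\phi$ is $C^1$ on $\operatorname{int}(I)$. $\phi(X):=\sum_{i,j}\phi(X_{ij})$. $\mathcal{F}(C):=\arg\min_{X\in\mathcal{U}(\mu,\nu)}\{\langle C,X\rangle+\gamma\phi(X)\}$. $\phi'_0:=\lim_{x\to0^+}\phi'(x)$, $\phi'_1:=\lim_{x\to1^-}\phi'(x)$. With $\phi'_0=-\infty$: $\mathcal{T}_\phi(\mu,\nu):=\mathcal{U}(\mu,\nu)\cap(0,1]^{n\times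 n}$ if $\phi'_1$ is finite and $\mathcal{U}(\mu,\nu)\cap(0,1)^{n\times n}$ if $\phi'_1=+\infty$. $S_h:=\{C\in\mathbb{R}_+^{n\times n}: C=C^\top,\ \operatorname{diag}(C)=0\}$. $(G_\phi^\gamma(X))_{ij}:=\frac{\gamma}{2}\big(\phi'(X_{ii})+\phi'(X_{jj})-\phi'(X_{ij})-\phi'(X_{ji})\big)$, and $U_\phi:=\{X\in\mathcal{T}_\phi(\mu,\nu): (G_\phi^\gamma(X))_{ij}\ge0\ \forall i,j\}$. (It is known that $\mathcal{F}$ restricted to $S_h$ is a bijection onto $U_\phi$, so $\hat C,\tilde C$ are well defined.) *)

theory Defs
  imports "HOL-Analysis.Analysis"
begin

text \<open>A function phi : R -> (-inf, +inf] is modelled as a map real => ereal.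
  Matrices are real-valued functions on a finite nonempty index type 'n (so n = CARD('n) >= 1).\<close>

definition edom :: "(real \<Rightarrow> ereal) \<Rightarrow> real set" where
  "edom \<phi> = {x. \<phi> x < \<infinity>}"

text \<open>phi' : the ordinary derivative of phi (meaningful on the interior of the domain,
  where phi is finite).\<close>
definition dphi :: "(real \<Rightarrow> ereal) \<Rightarrow> real \<Rightarrow> real" where
  "dphi \<phi> x = deriv (\<lambda>y. real_of_ereal (\<phi> y)) x"

definition strictly_convex_on :: "real set \<Rightarrow> (real \<Rightarrow> real) \<Rightarrow> bool" where
  "strictly_convex_on S f \<longleftrightarrow> (\<forall>x\<in>S. \<forall>y\<in>S. \<forall>t. x \<noteq> y \<and> 0 < t \<and> t < 1 \<longrightarrow>
      f ((1 - t) * x + t * y) < (1 - t) * f x + t * f y)"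

text \<open>Legendre type (Rockafellar, Sec. 26) in dimension one: proper, closed (closed epigraph),
  convex, strictly convex on the interior of the domain, essentially smooth.\<close>
definition legendre_type :: "(real \<Rightarrow> ereal) \<Rightarrow> bool" where
  "legendre_type \<phi> \<longleftrightarrow>
     (\<forall>x. \<phi> x \<noteq> -\<infinity>) \<and> edom \<phi> \<noteq> {} \<and>
     closed {(x, t::real). \<phi> x \<le> ereal t} \<and>
     (\<forall>x y t. 0 \<le> t \<and> t \<le> 1 \<longrightarrow>
        \<phi> ((1 - t) * x + t * y) \<le> ereal (1 - t) * \<phi> x + ereal t * \<phi> y) \<and>
     strictly_convex_on (interior (edom \<phi>)) (\<lambda>x. real_of_ereal (\<phi> x)) \<and>
     interior (edom \<phi>) \<noteq> {} \<and>
     (\<forall>x\<in>interior (edom \<phi>). (\<lambda>y. real_of_ereal (\<phi> y)) differentiable (at x)) \<and>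
     (\<forall>a\<in>frontier (interior (edom \<phi>)). \<forall>xs. (\<forall>k. xs k \<in> interior (edom \<phi>)) \<longrightarrow>
        xs \<longlonglongrightarrow> a \<longrightarrow> filterlim (\<lambda>k. \<bar>dphi \<phi> (xs k)\<bar>) at_top sequentially)"

definition bregman_assumption :: "(real \<Rightarrow> ereal) \<Rightarrow> bool" where
  "bregman_assumption \<phi> \<longleftrightarrow>
     is_interval (edom \<phi>) \<and> {0<..<1} \<subseteq> interior (edom \<phi>) \<and>
     legendre_type \<phi> \<and>
     (\<forall>x\<in>interior (edom \<phi>). ((\<lambda>y. real_of_ereal (\<phi> y)) has_real_derivative dphi \<phi> x) (at x)) \<and>
     continuous_on (interior (edom \<phi>)) (dphi \<phi>)"

definition dphi0_minf :: "(real \<Rightarrow> ereal) \<Rightarrow> bool" where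
  "dphi0_minf \<phi> \<longleftrightarrow> filterlim (dphi \<phi>) at_bot (at_right 0)"

text \<open>phi'_1 is finite (otherwise, by monotonicity of phi', phi'_1 = +infinity).\<close>
definition dphi1_finite :: "(real \<Rightarrow> ereal) \<Rightarrow> bool" where
  "dphi1_finite \<phi> \<longleftrightarrow> (\<exists>L. (dphi \<phi> \<longlongrightarrow> L) (at_left 1))"

definition prob_vec :: "('n::finite \<Rightarrow> real) \<Rightarrow> bool" where
  "prob_vec p \<longleftrightarrow> (\<forall>i. 0 \<le> p i) \<and> (\<Sum>i\<in>UNIV. p i) = 1"

definition transport_polytope ::
  "('n::finite \<Rightarrow> real) \<Rightarrow> ('n \<Rightarrow> real) \<Rightarrow> ('n \<Rightarrow> 'n \<Rightarrow> real) set" where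
  "transport_polytope \<mu> \<nu> = {X. (\<forall>i j. 0 \<le> X i j) \<and>
      (\<forall>i. (\<Sum>j\<in>UNIV. X i j) = \<mu> i) \<and> (\<forall>j. (\<Sum>i\<in>UNIV. X i j) = \<nu> j)}"

definition ot_objective ::
  "real \<Rightarrow> (real \<Rightarrow> ereal) \<Rightarrow> ('n::finite \<Rightarrow> 'n \<Rightarrow> real) \<Rightarrow> ('n \<Rightarrow> 'n \<Rightarrow> real) \<Rightarrow> ereal" where
  "ot_objective \<gamma> \<phi> C X =
     ereal (\<Sum>i\<in>UNIV. \<Sum>j\<in>UNIV. C i j * X i j) + ereal \<gamma> * (\<Sum>i\<in>UNIV. \<Sum>j\<in>UNIV. \<phi> (X i j))"

definition Fmap ::
  "('n::finite \<Rightarrow> real) \<Rightarrow> ('n \<Rightarrow> real) \<Rightarrow> real \<Rightarrow> (real \<Rightarrow> ereal) \<Rightarrow>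
   ('n \<Rightarrow> 'n \<Rightarrow> real) \<Rightarrow> ('n \<Rightarrow> 'n \<Rightarrow> real) set" where
  "Fmap \<mu> \<nu> \<gamma> \<phi> C = {X \<in> transport_polytope \<mu> \<nu>.
      \<forall>Y \<in> transport_polytope \<mu> \<nu>. ot_objective \<gamma> \<phi> C X \<le> ot_objective \<gamma> \<phi> C Y}"

definition T_phi ::
  "('n::finite \<Rightarrow> real) \<Rightarrow> ('n \<Rightarrow> real) \<Rightarrow> (real \<Rightarrow> ereal) \<Rightarrow> ('n \<Rightarrow> 'n \<Rightarrow> real) set" where
  "T_phi \<mu> \<nu> \<phi> = (if dphi1_finite \<phi>
      then {X \<in> transport_polytope \<mu> \<nu>. \<forall>i j. X i j \<in> {0<..1}}
      else {X \<in> transport_polytope \<mu> \<nu>. \<forall>i j. X i j \<in> {0<..<1}})"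

definition S_h :: "('n::finite \<Rightarrow> 'n \<Rightarrow> real) set" where
  "S_h = {C. (\<forall>i j. 0 \<le> C i j) \<and> (\<forall>i j. C i j = C j i) \<and> (\<forall>i. C i i = 0)}"

definition G_phi :: "real \<Rightarrow> (real \<Rightarrow> ereal) \<Rightarrow> ('n::finite \<Rightarrow> 'n \<Rightarrow> real) \<Rightarrow> 'n \<Rightarrow> 'n \<Rightarrow> real" where
  "G_phi \<gamma> \<phi> X i j = \<gamma> / 2 *
     (dphi \<phi> (X i i) + dphi \<phi> (X j j) - dphi \<phi> (X i j) - dphi \<phi> (X j i))"

definition U_phi ::
  "('n::finite \<Rightarrow> real) \<Rightarrow> ('n \<Rightarrow> real) \<Rightarrow> real \<Rightarrow> (real \<Rightarrow> ereal) \<Rightarrow> ('n \<Rightarrow> 'n \<Rightarrow> real) set" where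
  "U_phi \<mu> \<nu> \<gamma> \<phi> = {X \<in> T_phi \<mu> \<nu> \<phi>. \<forall>i j. 0 \<le> G_phi \<gamma> \<phi> X i j}"

definition max_norm :: "('n::finite \<Rightarrow> 'n \<Rightarrow> real) \<Rightarrow> real" where
  "max_norm M = Max {\<bar>M i j\<bar> | i j. True}"

end

theory Submission
  imports Defs
begin

text \<open>If a minimizer \<open>X\<close> of \<open>\<langle>C, X\<rangle> + \<gamma> \<phi>(X)\<close> over \<open>\<U>(\<mu>, \<nu>)\<close> has all entries in \<open>(0, 1)\<close>,
  it can be perturbed along every direction with vanishing row and column sums, so the directional
  derivative along \<open>E\<^sub>i\<^sub>i + E\<^sub>j\<^sub>j - E\<^sub>i\<^sub>j - E\<^sub>j\<^sub>i\<close> is zero. For \<open>C \<in> S\<^sub>h\<close> this says exactly \<open>C = G\<^sub>\<phi>\<^sup>\<gamma>(X)\<close>.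
  Hence \<open>C\<^sub>h - C\<^sub>t = G(X\<^sub>h) - G(X\<^sub>t)\<close>, and each entry of the right-hand side is \<open>\<gamma>/2\<close> times a signed
  sum of four entries of \<open>\<phi>'(X\<^sub>h) - \<phi>'(X\<^sub>t)\<close>.

  Interiority comes from \<open>U\<^sub>\<phi> \<subseteq> T\<^sub>\<phi>\<close>: entries are positive, hence below \<open>1\<close> once \<open>n \<ge> 2\<close>
  (for \<open>n = 1\<close>, \<open>S\<^sub>h = {0}\<close>).\<close>

lemma bregman_finite_on_unit_interval:
  assumes "bregman_assumption \<phi>" "x \<in> {0<..<1}"
  shows "\<phi> x = ereal (real_of_ereal (\<phi> x))"
proof -
  have "x \<in> interior (edom \<phi>)" using assms by (auto simp: bregman_assumption_def)
  then have "\<phi> x < \<infinity>" using interior_subset by (auto simp: edom_def)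
  moreover have "\<phi> x \<noteq> -\<infinity>"
    using assms(1) by (auto simp: bregman_assumption_def legendre_type_def)
  ultimately show ?thesis by (cases "\<phi> x") auto
qed

lemma bregman_has_real_derivative_on_unit_interval:
  assumes "bregman_assumption \<phi>" "x \<in> {0<..<1}"
  shows "((\<lambda>y. real_of_ereal (\<phi> y)) has_real_derivative dphi \<phi> x) (at x)"
proof -
  have "x \<in> interior (edom \<phi>)" using assms by (auto simp: bregman_assumption_def)
  then show ?thesis using assms(1) by (auto simp: bregman_assumption_def)
qed

lemma ot_objective_in_unit_cube:
  assumes "bregman_assumption \<phi>" "\<forall>k l. X k l \<in> {0<..<1}"
  shows "ot_objective \<gamma> \<phi> C X =
    ereal (\<Sum>k\<in>UNIV. \<Sum>l\<in>UNIV. C k l * X k l + \<gamma> * real_of_ereal (\<phi> (X k l)))"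
proof -
  have "(\<Sum>k\<in>UNIV. \<Sum>l\<in>UNIV. \<phi> (X k l))
      = (\<Sum>k\<in>UNIV. \<Sum>l\<in>UNIV. ereal (real_of_ereal (\<phi> (X k l))))"
    using assms by (intro sum.cong refl bregman_finite_on_unit_interval) auto
  then show ?thesis
    by (simp add: ot_objective_def sum_ereal sum.distrib sum_distrib_left)
qed

lemma Fmap_stationary_in_unit_cube:
  fixes X C D :: "'n::finite \<Rightarrow> 'n \<Rightarrow> real"
  assumes br: "bregman_assumption \<phi>" and opt: "X \<in> Fmap \<mu> \<nu> \<gamma> \<phi> C"
    and X01: "\<forall>k l. X k l \<in> {0<..<1}"
    and rows: "\<And>k. (\<Sum>l\<in>UNIV. D k l) = 0" and cols: "\<And>l. (\<Sum>k\<in>UNIV. D k l) = 0"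
  shows "(\<Sum>k\<in>UNIV. \<Sum>l\<in>UNIV. (C k l + \<gamma> * dphi \<phi> (X k l)) * D k l) = 0"
proof -
  define Y where "Y t k l = X k l + t * D k l" for t k l
  define h where "h t = (\<Sum>k\<in>UNIV. \<Sum>l\<in>UNIV. C k l * Y t k l + \<gamma> * real_of_ereal (\<phi> (Y t k l)))"
    for t
  have near: "\<forall>\<^sub>F t in at 0. \<forall>k l. Y t k l \<in> {0<..<1}"
  proof (intro eventually_all_finite)
    fix k l
    have "((\<lambda>t. Y t k l) \<longlongrightarrow> X k l) (at 0)"
      unfolding Y_def by (auto intro!: tendsto_eq_intros)
    then show "\<forall>\<^sub>F t in at 0. Y t k l \<in> {0<..<1}"
      by (rule topological_tendstoD) (use X01 in auto)
  qed
  have feasible: "Y t \<in> transport_polytope \<mu> \<nu>" if "\<forall>k l. Y t k l \<in> {0<..<1}" for t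
    using opt that rows cols
    by (auto simp: Y_def Fmap_def transport_polytope_def sum.distrib less_imp_le
        simp flip: sum_distrib_left)
  have "\<forall>\<^sub>F t in at 0. h 0 \<le> h t"
    using near
  proof (rule eventually_mono)
    fix t assume Y01: "\<forall>k l. Y t k l \<in> {0<..<1}"
    then have "ot_objective \<gamma> \<phi> C X \<le> ot_objective \<gamma> \<phi> C (Y t)"
      using opt feasible by (auto simp: Fmap_def)
    then show "h 0 \<le> h t"
      using X01 Y01 by (simp add: h_def Y_def ot_objective_in_unit_cube[OF br])
  qed
  moreover have "(h has_real_derivative
      (\<Sum>k\<in>UNIV. \<Sum>l\<in>UNIV. (C k l + \<gamma> * dphi \<phi> (X k l)) * D k l)) (at 0)"
    unfolding h_def distrib_right
  proof (intro DERIV_sum DERIV_add)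
    fix k l
    have line: "((\<lambda>t. Y t k l) has_real_derivative D k l) (at 0)"
      unfolding Y_def by (auto intro!: derivative_eq_intros)
    have outer: "((\<lambda>y. real_of_ereal (\<phi> y)) has_real_derivative dphi \<phi> (Y 0 k l)) (at (Y 0 k l))"
      using X01 by (simp add: Y_def bregman_has_real_derivative_on_unit_interval[OF br])
    have "((\<lambda>t. real_of_ereal (\<phi> (Y t k l))) has_real_derivative
        dphi \<phi> (X k l) * D k l) (at 0)"
      using DERIV_chain2[OF outer line] by (simp add: Y_def)
    then show "((\<lambda>t. \<gamma> * real_of_ereal (\<phi> (Y t k l))) has_real_derivative
        \<gamma> * dphi \<phi> (X k l) * D k l) (at 0)"
      unfolding mult.assoc by (rule DERIV_cmult)
    show "((\<lambda>t. C k l * Y t k l) has_real_derivative C k l * D k l) (at 0)"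
      unfolding Y_def by (auto intro!: derivative_eq_intros)
  qed
  ultimately have "(*) (\<Sum>k\<in>UNIV. \<Sum>l\<in>UNIV. (C k l + \<gamma> * dphi \<phi> (X k l)) * D k l)
      = (\<lambda>_. 0)"
    by (intro has_derivative_local_min) (simp_all add: has_field_derivative_def)
  from fun_cong[OF this, of 1] show ?thesis by simp
qed

definition swap_direction :: "'n::finite \<Rightarrow> 'n \<Rightarrow> 'n \<Rightarrow> 'n \<Rightarrow> real" where
  "swap_direction i j k l = (of_bool (k = i) - of_bool (k = j)) * (of_bool (l = i) - of_bool (l = j))"

lemma sum_mult_indicator_diff:
  fixes f :: "'n::finite \<Rightarrow> real"
  shows "(\<Sum>k\<in>UNIV. f k * (of_bool (k = i) - of_bool (k = j))) = f i - f j"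
  by (simp add: right_diff_distrib sum_subtractf)

lemma row_sum_swap_direction: "(\<Sum>l\<in>UNIV. swap_direction i j k l) = 0"
  using sum_mult_indicator_diff[of "\<lambda>_. of_bool (k = i) - of_bool (k = j)" i j]
  by (simp add: swap_direction_def)

lemma column_sum_swap_direction: "(\<Sum>k\<in>UNIV. swap_direction i j k l) = 0"
  using sum_mult_indicator_diff[of "\<lambda>_. of_bool (l = i) - of_bool (l = j)" i j]
  by (simp add: swap_direction_def mult.commute)

lemma sum_mult_swap_direction:
  "(\<Sum>k\<in>UNIV. \<Sum>l\<in>UNIV. w k l * swap_direction i j k l) = w i i + w j j - w i j - w j i"
proof -
  have "(\<Sum>k\<in>UNIV. \<Sum>l\<in>UNIV. w k l * swap_direction i j k l)
      = (\<Sum>k\<in>UNIV. (w k i - w k j) * (of_bool (k = i) - of_bool (k = j)))"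
    unfolding swap_direction_def mult.left_commute[of "w _ _"]
    by (simp add: sum_mult_indicator_diff mult.commute flip: sum_distrib_left)
  also have "\<dots> = w i i + w j j - w i j - w j i"
    by (simp add: sum_mult_indicator_diff)
  finally show ?thesis .
qed

lemma Fmap_in_unit_cube_eq_G_phi:
  assumes br: "bregman_assumption \<phi>" and opt: "X \<in> Fmap \<mu> \<nu> \<gamma> \<phi> C"
    and X01: "\<forall>k l. X k l \<in> {0<..<1}" and C: "C \<in> S_h"
  shows "C = G_phi \<gamma> \<phi> X"
proof (intro ext)
  fix i j
  have "C i i + C j j - C i j - C j i
      + \<gamma> * (dphi \<phi> (X i i) + dphi \<phi> (X j j) - dphi \<phi> (X i j) - dphi \<phi> (X j i)) = 0"
    using Fmap_stationary_in_unit_cube[OF br opt X01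
        row_sum_swap_direction[of i j] column_sum_swap_direction[of i j]]
    unfolding sum_mult_swap_direction by (simp add: algebra_simps)
  moreover have "C i i = 0" "C j j = 0" "C j i = C i j" using C by (auto simp: S_h_def)
  ultimately show "C i j = G_phi \<gamma> \<phi> X i j" by (simp add: G_phi_def field_simps)
qed

lemma transport_polytope_row_pair_le_one:
  assumes "X \<in> transport_polytope \<mu> \<nu>" "prob_vec \<mu>" "l \<noteq> m"
  shows "X k l + X k m \<le> 1"
proof -
  have "X k l + X k m = (\<Sum>j\<in>{l, m}. X k j)" using assms(3) by simp
  also have "\<dots> \<le> (\<Sum>j\<in>UNIV. X k j)"
    using assms(1) by (intro sum_mono2) (auto simp: transport_polytope_def)
  also have "\<dots> = \<mu> k" using assms(1) by (simp add: transport_polytope_def)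
  also have "\<dots> \<le> (\<Sum>i\<in>UNIV. \<mu> i)"
    using assms(2) by (intro member_le_sum) (auto simp: prob_vec_def)
  also have "\<dots> = 1" using assms(2) by (simp add: prob_vec_def)
  finally show ?thesis .
qed

lemma T_phi_in_unit_cube:
  fixes X :: "'n::finite \<Rightarrow> 'n \<Rightarrow> real"
  assumes X: "X \<in> T_phi \<mu> \<nu> \<phi>" and "prob_vec \<mu>" and "(i::'n) \<noteq> j"
  shows "X k l \<in> {0<..<1}"
proof -
  have pos: "0 < X k m" for m using X by (auto simp: T_phi_def split: if_splits)
  obtain m where "m \<noteq> l" using \<open>i \<noteq> j\<close> by metis
  then have "X k l + X k m \<le> 1"
    using X assms(2) by (intro transport_polytope_row_pair_le_one) (auto simp: T_phi_def split: if_splits)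
  with pos[of l] pos[of m] show ?thesis by simp
qed

lemma finite_abs_entries:
  fixes M :: "'n::finite \<Rightarrow> 'n \<Rightarrow> real"
  shows "finite {\<bar>M i j\<bar> | i j. True}"
proof -
  have "{\<bar>M i j\<bar> | i j. True} = (\<lambda>(i, j). \<bar>M i j\<bar>) ` UNIV" by auto
  then show ?thesis by simp
qed

lemma abs_le_max_norm: "\<bar>M i j\<bar> \<le> max_norm M"
  unfolding max_norm_def by (rule Max_ge[OF finite_abs_entries]) auto

lemma max_norm_nonneg: "0 \<le> max_norm M"
  using abs_le_max_norm[of M undefined undefined] by linarith

lemma max_norm_le:
  assumes "\<And>i j. \<bar>M i j\<bar> \<le> b"
  shows "max_norm M \<le> b"
  unfolding max_norm_def using assms by (subst Max_le_iff[OF finite_abs_entries]) auto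

lemma max_norm_G_phi_diff_le:
  assumes "0 \<le> \<gamma>"
  shows "max_norm (\<lambda>i j. G_phi \<gamma> \<phi> X i j - G_phi \<gamma> \<phi> Y i j)
    \<le> 2 * \<gamma> * max_norm (\<lambda>i j. dphi \<phi> (X i j) - dphi \<phi> (Y i j))"
proof (rule max_norm_le)
  fix i j
  define \<Delta> where "\<Delta> k l = dphi \<phi> (X k l) - dphi \<phi> (Y k l)" for k l
  have diff: "G_phi \<gamma> \<phi> X i j - G_phi \<gamma> \<phi> Y i j = \<gamma> / 2 * (\<Delta> i i + \<Delta> j j - \<Delta> i j - \<Delta> j i)"
    by (simp add: G_phi_def \<Delta>_def algebra_simps)
  have "\<bar>G_phi \<gamma> \<phi> X i j - G_phi \<gamma> \<phi> Y i j\<bar> = \<gamma> / 2 * \<bar>\<Delta> i i + \<Delta> j j - \<Delta> i j - \<Delta> j i\<bar>"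
    unfolding diff abs_mult using assms by simp
  also have "\<dots> \<le> \<gamma> / 2 * (4 * max_norm \<Delta>)"
    using abs_le_max_norm[of \<Delta> i i] abs_le_max_norm[of \<Delta> j j]
      abs_le_max_norm[of \<Delta> i j] abs_le_max_norm[of \<Delta> j i] assms
    by (intro mult_left_mono) auto
  finally show "\<bar>G_phi \<gamma> \<phi> X i j - G_phi \<gamma> \<phi> Y i j\<bar> \<le> 2 * \<gamma> * max_norm \<Delta>" by simp
qed

theorem proposition4:
  fixes \<mu> \<nu> :: "'n::finite \<Rightarrow> real" and \<gamma> :: real and \<phi> :: "real \<Rightarrow> ereal"
    and Xh Xt Ch Ct :: "'n \<Rightarrow> 'n \<Rightarrow> real"
  assumes "prob_vec \<mu>" and "prob_vec \<nu>" and "\<gamma> > 0"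
    and "bregman_assumption \<phi>" and "dphi0_minf \<phi>"
    and "Xh \<in> U_phi \<mu> \<nu> \<gamma> \<phi>" and "Xt \<in> U_phi \<mu> \<nu> \<gamma> \<phi>"
    and "Ch \<in> S_h" and "Ct \<in> S_h"
    and "Fmap \<mu> \<nu> \<gamma> \<phi> Ch = {Xh}" and "Fmap \<mu> \<nu> \<gamma> \<phi> Ct = {Xt}"
  shows "max_norm (\<lambda>i j. Ch i j - Ct i j)
           \<le> 2 * \<gamma> * max_norm (\<lambda>i j. dphi \<phi> (Xh i j) - dphi \<phi> (Xt i j))"
proof (cases "\<exists>i j :: 'n. i \<noteq> j")
  case True
  then obtain i j :: 'n where "i \<noteq> j" by blast
  have "\<forall>k l. Xh k l \<in> {0<..<1}" "\<forall>k l. Xt k l \<in> {0<..<1}"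
    using assms(6,7) T_phi_in_unit_cube[OF _ assms(1) \<open>i \<noteq> j\<close>] by (auto simp: U_phi_def)
  then have "Ch = G_phi \<gamma> \<phi> Xh" "Ct = G_phi \<gamma> \<phi> Xt"
    using Fmap_in_unit_cube_eq_G_phi assms(4,8-11) by blast+
  then show ?thesis using max_norm_G_phi_diff_le[of \<gamma> \<phi> Xh Xt] assms(3) by simp
next
  case False
  then have "Ch i j - Ct i j = 0" for i j
    using assms(8,9) by (simp add: S_h_def) (metis diff_self)
  then show ?thesis
    using assms(3) by (intro max_norm_le) (simp add: max_norm_nonneg)
qed

end
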